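(* Let $f := E_4^6\Delta + 2\Delta^3$. For every prime $\ell$, $$a_\ell(f) \equiv \begin{cases} 2 \pmod 4 & \text{if } \ell \equiv 1,3,5 \pmod 8,\\ 0 \pmod 4 & \text{if } \ell \equiv 2,7 \pmod 8.\end{cases}$$
   Context: $q = e^{2\pi i z}$. $E_4 = 1 + 240\sum_{n\ge1}\big(\sum_{d\mid n} d^3\big)q^n$, and $\Delta = \sum_{n\ge1}\tau(n)q^n$ is the unique normalized cusp form of weight $12$ on $\mathrm{SL}_2(\mathbb{Z})$. $a_n(h)$ denotes the coefficient of $q^n$ in the $q$-expansion of $h$. *)

theory Defs
  imports "HOL-Computational_Algebra.Formal_Power_Series" "HOL-Number_Theory.Cong"
begin

text \<open>q-expansions are modelled as formal power series in q = fps_X with integer coefficients.\<close>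

definition sigma3 :: "nat \<Rightarrow> int" where
  "sigma3 n = (\<Sum>d\<in>{d. d dvd n}. int d ^ 3)"

definition E4 :: "int fps" where
  "E4 = Abs_fps (\<lambda>n. if n = 0 then 1 else 240 * sigma3 n)"

text \<open>Delta = q prod_{k>=1} (1 - q^k)^24; the n-th coefficient only depends on the
  factors with k <= n, so we truncate the product at k = n.\<close>
definition Delta :: "int fps" where
  "Delta = Abs_fps (\<lambda>n. fps_nth (fps_X * (\<Prod>k\<in>{1..n}. (1 - fps_X ^ k) ^ 24)) n)"

definition f_form :: "int fps" where
  "f_form = E4 ^ 6 * Delta + 2 * Delta ^ 3"

end

(*
  Modulo 4 we have E4 = 1, and since (1 - x)^4 = 1 - x^4 modulo 2, squaring gives
  (1 - x)^8 = (1 - x^4)^2 modulo 4; hence Delta = q prod (1 - q^(4k))^6 modulo 4 and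
  Delta^3 = q^3 prod (1 - q^(8k))^3 (1 - q^(16k))^3 modulo 2.  Jacobi's identity
  prod (1 - q^k)^3 = sum (-1)^j (2j + 1) q^(j(j+1)/2), whose coefficients are 1 modulo 4,
  turns every cube into psi(q^d) = sum q^(d j(j+1)/2).  As 8 j(j+1)/2 + 1 = (2j + 1)^2, this
  gives a_l(f) = r_1(2l) + 2 r_2(l) modulo 4, where r_k(n) counts the solutions of
  x^2 + k y^2 = n in odd x, y.  For a prime l, r_1(2l) is 2 or 0 according as l = 1 mod 4
  or not, and r_2(l) is 1 or 0 according as l = 3 mod 8 or not: existence comes from Thue's
  lemma and the quadratic characters of -1 and -2, uniqueness from the Brahmagupta identity.
  Jacobi's identity is used in a finite form, obtained by differentiating the q-binomial
  theorem at x = 1.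
*)

theory Submission
  imports Defs "HOL-Number_Theory.Number_Theory" "HOL-Computational_Algebra.Polynomial"
    "HOL-Library.Discrete_Functions"
begin

section \<open>Congruences of power series modulo m and X^N\<close>

definition fps_cong :: "'a::comm_ring_1 \<Rightarrow> nat \<Rightarrow> 'a fps \<Rightarrow> 'a fps \<Rightarrow> bool" where
  "fps_cong m N A B \<longleftrightarrow> (\<exists>C D. A = B + fps_const m * C + fps_X ^ N * D)"

lemma fps_cong_refl [simp]: "fps_cong m N A A"
  unfolding fps_cong_def by (rule exI[of _ 0], rule exI[of _ 0]) simp

lemma fps_cong_trans [trans]:
  assumes "fps_cong m N A B" "fps_cong m N B E"
  shows "fps_cong m N A E"
proof -
  obtain C D C' D' where "A = B + fps_const m * C + fps_X ^ N * D" "B = E + fps_const m * C' + fps_X ^ N * D'"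
    using assms unfolding fps_cong_def by blast
  then have "A = E + fps_const m * (C + C') + fps_X ^ N * (D + D')"
    by (simp add: algebra_simps)
  then show ?thesis unfolding fps_cong_def by blast
qed

lemma fps_cong_add:
  assumes "fps_cong m N A B" "fps_cong m N A' B'"
  shows "fps_cong m N (A + A') (B + B')"
proof -
  obtain C D C' D' where "A = B + fps_const m * C + fps_X ^ N * D" "A' = B' + fps_const m * C' + fps_X ^ N * D'"
    using assms unfolding fps_cong_def by blast
  then have "A + A' = B + B' + fps_const m * (C + C') + fps_X ^ N * (D + D')"
    by (simp add: algebra_simps)
  then show ?thesis unfolding fps_cong_def by blast
qed

lemma fps_cong_mult:
  assumes "fps_cong m N A B" "fps_cong m N A' B'"
  shows "fps_cong m N (A * A') (B * B')"
proof -
  obtain C D C' D' where h: "A = B + fps_const m * C + fps_X ^ N * D" "A' = B' + fps_const m * C' + fps_X ^ N * D'"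
    using assms unfolding fps_cong_def by blast
  have "A * A' = B * B' + fps_const m * (B * C' + C * B' + fps_const m * C * C' + C * fps_X ^ N * D')
     + fps_X ^ N * (B * D' + D * B' + fps_const m * C' * D + fps_X ^ N * D * D')"
    unfolding h by (simp add: ring_distribs ac_simps)
  then show ?thesis unfolding fps_cong_def by blast
qed

lemma fps_cong_mult_left: "fps_cong m N A B \<Longrightarrow> fps_cong m N (E * A) (E * B)"
  by (rule fps_cong_mult[OF fps_cong_refl])

lemma fps_cong_power: "fps_cong m N A B \<Longrightarrow> fps_cong m N (A ^ k) (B ^ k)"
  by (induction k) (simp_all add: fps_cong_mult)

lemma fps_cong_sum:
  "(\<And>i. i \<in> S \<Longrightarrow> fps_cong m N (f i) (g i)) \<Longrightarrow> fps_cong m N (sum f S) (sum g S)"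
  by (induction S rule: infinite_finite_induct) (simp_all add: fps_cong_add)

lemma fps_cong_prod:
  "(\<And>i. i \<in> S \<Longrightarrow> fps_cong m N (f i) (g i)) \<Longrightarrow> fps_cong m N (prod f S) (prod g S)"
  by (induction S rule: infinite_finite_induct) (simp_all add: fps_cong_mult)

lemma fps_cong_mono:
  assumes "fps_cong m N A B" "N' \<le> N"
  shows "fps_cong m N' A B"
proof -
  obtain C D where "A = B + fps_const m * C + fps_X ^ N * D"
    using assms(1) unfolding fps_cong_def by blast
  also have "fps_X ^ N * D = fps_X ^ N' * (fps_X ^ (N - N') * D)"
    using assms(2) by (simp flip: mult.assoc power_add)
  finally show ?thesis unfolding fps_cong_def by blast
qed

lemma fps_cong_dvd:
  assumes "fps_cong m N A B" "m' dvd m"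
  shows "fps_cong m' N A B"
proof -
  obtain C D where "A = B + fps_const m * C + fps_X ^ N * D"
    using assms(1) unfolding fps_cong_def by blast
  moreover obtain k where "m = m' * k" using assms(2) by blast
  ultimately have "A = B + fps_const m' * (fps_const k * C) + fps_X ^ N * D"
    by (simp flip: fps_const_mult add: mult.assoc)
  then show ?thesis unfolding fps_cong_def by blast
qed

lemma fps_cong_mult_X_power:
  assumes "fps_cong m N A B"
  shows "fps_cong m (N + e) (fps_X ^ e * A) (fps_X ^ e * B)"
proof -
  obtain C D where "A = B + fps_const m * C + fps_X ^ N * D"
    using assms unfolding fps_cong_def by blast
  then have "fps_X ^ e * A = fps_X ^ e * B + fps_const m * (fps_X ^ e * C) + fps_X ^ (N + e) * D"
    by (simp add: algebra_simps power_add)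
  then show ?thesis unfolding fps_cong_def by blast
qed

lemma fps_cong_if_eq_plus_multiple: "A = B + fps_const m * C \<Longrightarrow> fps_cong m N A B"
  unfolding fps_cong_def by (intro exI[of _ C] exI[of _ 0]) simp

lemma fps_cong_if_nth_eq:
  assumes "\<And>i. i < N \<Longrightarrow> fps_nth A i = fps_nth B i"
  shows "fps_cong m N A B"
proof -
  have "A - B = fps_X ^ N * fps_shift N (A - B)"
    by (rule fps_ext) (use assms in \<open>auto simp: fps_X_power_mult_nth\<close>)
  then show ?thesis unfolding fps_cong_def
    by (intro exI[of _ 0] exI[of _ "fps_shift N (A - B)"]) (simp add: algebra_simps)
qed

lemma fps_cong_one_minus_X_power_one: "N \<le> e \<Longrightarrow> fps_cong m N (1 - fps_X ^ e) 1"
  unfolding fps_cong_def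
  by (intro exI[of _ 0] exI[of _ "- (fps_X ^ (e - N))"]) (simp flip: power_add)

lemma fps_cong_2_square:
  fixes A B :: "'a::comm_ring_1 fps"
  assumes "fps_cong 2 N A B"
  shows "fps_cong 4 N (A ^ 2) (B ^ 2)"
proof -
  obtain C D where h: "A = B + fps_const 2 * C + fps_X ^ N * D"
    using assms unfolding fps_cong_def by blast
  have "A ^ 2 = B ^ 2 + fps_const 4 * (B * C + C ^ 2)
      + fps_X ^ N * (2 * B * D + 4 * C * D + fps_X ^ N * D ^ 2)"
    unfolding h by (simp add: power2_eq_square numeral_fps_const algebra_simps)
  then show ?thesis unfolding fps_cong_def by blast
qed

lemma fps_cong_double:
  fixes A B :: "'a::comm_ring_1 fps"
  assumes "fps_cong 2 N A B"
  shows "fps_cong 4 N (2 * A) (2 * B)"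
proof -
  obtain C D where "A = B + fps_const 2 * C + fps_X ^ N * D"
    using assms unfolding fps_cong_def by blast
  then have "2 * A = 2 * B + fps_const 4 * C + fps_X ^ N * (2 * D)"
    by (simp add: algebra_simps numeral_fps_const)
  then show ?thesis unfolding fps_cong_def by blast
qed

lemma fps_cong_nth:
  fixes A B :: "int fps"
  assumes "fps_cong m N A B" "i < N"
  shows "[fps_nth A i = fps_nth B i] (mod m)"
proof -
  obtain C D where "A = B + fps_const m * C + fps_X ^ N * D"
    using assms(1) unfolding fps_cong_def by blast
  then have "fps_nth A i = fps_nth B i + m * fps_nth C i"
    using assms(2) by (simp add: fps_X_power_mult_nth)
  then show ?thesis by (simp add: cong_def)
qed

section \<open>A finite form of Jacobi's identity\<close>

lemma choose_two_Suc: "Suc n choose 2 = (n choose 2) + n"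
  by (simp add: numeral_2_eq_2)

lemma choose_two_add: "(a + b) choose 2 = (a choose 2) + (b choose 2) + a * b"
  by (induction b) (simp_all add: choose_two_Suc)

lemma choose_two_double: "2 * (n choose 2) + n = n * n"
  by (induction n) (simp_all add: choose_two_Suc algebra_simps)

lemma odd_square_eq_choose_two: "(2 * a + 1) ^ 2 = 8 * (Suc a choose 2) + 1"
  using choose_two_double[of a] by (simp add: choose_two_Suc power2_eq_square algebra_simps)

lemma le_choose_two_Suc: "n \<le> Suc n choose 2"
  by (induction n) (simp_all add: choose_two_Suc)

definition qpoch :: "'a::comm_ring_1 \<Rightarrow> nat \<Rightarrow> 'a" where
  "qpoch q n = (\<Prod>i<n. 1 - q ^ Suc i)"

lemma qpoch_0 [simp]: "qpoch q 0 = 1"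
  by (simp add: qpoch_def)

lemma qpoch_Suc: "qpoch q (Suc n) = qpoch q n * (1 - q ^ Suc n)"
  by (simp add: qpoch_def)

lemma qpoch_split: "a \<le> b \<Longrightarrow> qpoch q b = qpoch q a * (\<Prod>i\<in>{a..<b}. 1 - q ^ Suc i)"
  unfolding qpoch_def using prod.atLeastLessThan_concat[of 0 a b "\<lambda>i. 1 - q ^ Suc i"]
  by (simp add: atLeast0LessThan)

lemma fps_nth_0_qpoch: "fps_nth q 0 = 0 \<Longrightarrow> fps_nth (qpoch q n) 0 = 1"
  by (induction n) (simp_all add: qpoch_Suc fps_power_zeroth)

lemma qpoch_fps_nonzero: "fps_nth (q :: 'a::comm_ring_1 fps) 0 = 0 \<Longrightarrow> qpoch q n \<noteq> 0"
  using fps_nth_0_qpoch[of q n] by auto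

fun qbinomial :: "'a::comm_ring_1 \<Rightarrow> nat \<Rightarrow> nat \<Rightarrow> 'a" where
  "qbinomial q m 0 = 1"
| "qbinomial q 0 (Suc k) = 0"
| "qbinomial q (Suc m) (Suc k) = q ^ Suc k * qbinomial q m (Suc k) + qbinomial q m k"

lemma qbinomial_eq_0: "m < k \<Longrightarrow> qbinomial q m k = 0"
  by (induction q m k rule: qbinomial.induct) simp_all

lemma qbinomial_same [simp]: "qbinomial q m m = 1"
  by (induction m) (simp_all add: qbinomial_eq_0)

lemma qbinomial_mult_qpoch:
  "k \<le> m \<Longrightarrow> qbinomial q m k * qpoch q k * qpoch q (m - k) = qpoch q m"
proof (induction m arbitrary: k)
  case (Suc m)
  show ?case
  proof (cases k)
    case (Suc k')
    show ?thesis
    proof (cases "k' = m")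
      case True
      then show ?thesis using Suc by (simp add: qbinomial_eq_0 qpoch_Suc)
    next
      case False
      then have lt: "Suc k' \<le> m" using Suc \<open>k \<le> Suc m\<close> by simp
      have IH1: "qbinomial q m (Suc k') * qpoch q (Suc k') * qpoch q (m - Suc k') = qpoch q m"
        using Suc.IH[OF lt] .
      have IH2: "qbinomial q m k' * qpoch q k' * qpoch q (m - k') = qpoch q m"
        using Suc.IH lt by simp
      have m_k': "m - k' = Suc (m - Suc k')" using lt by simp
      have "qbinomial q (Suc m) k * qpoch q k * qpoch q (Suc m - k)
          = (q ^ Suc k' * qbinomial q m (Suc k') + qbinomial q m k') * qpoch q (Suc k') * qpoch q (m - k')"
        using Suc by simp
      also have "\<dots> = q ^ Suc k' * (qbinomial q m (Suc k') * qpoch q (Suc k') * qpoch q (m - Suc k'))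
            * (1 - q ^ (m - k'))
          + (qbinomial q m k' * qpoch q k' * qpoch q (m - k')) * (1 - q ^ Suc k')"
        unfolding m_k' qpoch_Suc by (simp add: algebra_simps)
      also have "\<dots> = qpoch q m * (q ^ Suc k' * (1 - q ^ (m - k')) + (1 - q ^ Suc k'))"
        unfolding IH1 IH2 by (simp add: algebra_simps)
      also have "q ^ Suc k' * (1 - q ^ (m - k')) = q ^ Suc k' - q ^ Suc m"
        using lt by (simp add: algebra_simps flip: power_add)
      finally show ?thesis by (simp add: qpoch_Suc algebra_simps)
    qed
  qed simp
qed simp

lemma qbinomial_symmetric:
  fixes q :: "'a::idom"
  assumes "\<And>n. qpoch q n \<noteq> 0" "k \<le> m"
  shows "qbinomial q m (m - k) = qbinomial q m k"
proof -
  have "qbinomial q m (m - k) * (qpoch q k * qpoch q (m - k)) = qbinomial q m k * (qpoch q k * qpoch q (m - k))"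
    using qbinomial_mult_qpoch[of k m q] qbinomial_mult_qpoch[of "m - k" m q] assms(2)
    by (simp add: algebra_simps)
  then show ?thesis using assms(1) by simp
qed

definition qbinomial_term :: "'a::comm_ring_1 \<Rightarrow> 'a \<Rightarrow> 'a \<Rightarrow> nat \<Rightarrow> nat \<Rightarrow> 'a" where
  "qbinomial_term q y z m k = q ^ (k choose 2) * qbinomial q m k * z ^ k * y ^ (m - k)"

lemma coeff_sum_monom_atMost:
  "coeff (\<Sum>k\<le>m. monom (f k) k) j = (if j \<le> m then f j else 0)"
  by (simp add: coeff_sum)

lemma qbinomial_term_Suc:
  assumes "j \<le> m"
  shows "y * qbinomial_term q y (z * q) m (Suc j) + z * qbinomial_term q y (z * q) m j
       = qbinomial_term q y z (Suc m) (Suc j)"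
proof (cases "j = m")
  case True
  then show ?thesis
    by (simp add: qbinomial_term_def qbinomial_eq_0 choose_two_Suc power_add algebra_simps power_mult_distrib)
next
  case False
  then have y_power: "y * y ^ (m - Suc j) = y ^ (m - j)"
    using assms by (metis Suc_diff_Suc le_neq_implies_less power_Suc)
  have "y * qbinomial_term q y (z * q) m (Suc j)
      = q ^ (Suc j choose 2) * qbinomial q m (Suc j) * (z * q) ^ Suc j * y ^ (m - j)"
    unfolding qbinomial_term_def by (simp add: ac_simps flip: y_power)
  then show ?thesis
    using assms by (simp add: qbinomial_term_def choose_two_Suc power_add power_mult_distrib algebra_simps)
qed

theorem qbinomial_theorem:
  "(\<Prod>i<m. [:y, z * q ^ i:]) = (\<Sum>k\<le>m. monom (qbinomial_term q y z m k) k)"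
proof (induction m arbitrary: z)
  case 0
  then show ?case by (simp add: qbinomial_term_def binomial_eq_0 monom_0 one_pCons)
next
  case (Suc m)
  let ?c = "qbinomial_term q y (z * q) m"
  let ?P = "\<Sum>k\<le>m. monom (?c k) k"
  have "(\<Prod>i<Suc m. [:y, z * q ^ i:]) = [:y, z:] * (\<Prod>i<m. [:y, (z * q) * q ^ i:])"
    unfolding prod.lessThan_Suc_shift by (simp del: prod.lessThan_Suc add: ac_simps)
  also have "\<dots> = [:y, z:] * ?P"
    using Suc.IH by simp
  finally have prod_eq: "(\<Prod>i<Suc m. [:y, z * q ^ i:]) = [:y, z:] * ?P" .
  show ?case
  proof (rule poly_eqI)
    fix j
    have coeff_eq: "coeff ([:y, z:] * ?P) j = y * coeff ?P j + (case j of 0 \<Rightarrow> 0 | Suc j' \<Rightarrow> z * coeff ?P j')"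
      by (cases j) (simp_all add: coeff_pCons)
    have vanish: "?c (Suc m) = 0"
      by (simp add: qbinomial_term_def qbinomial_eq_0)
    show "coeff (\<Prod>i<Suc m. [:y, z * q ^ i:]) j = coeff (\<Sum>k\<le>Suc m. monom (qbinomial_term q y z (Suc m) k) k) j"
    proof (cases j)
      case 0
      then show ?thesis
        unfolding prod_eq coeff_eq coeff_sum_monom_atMost by (simp add: qbinomial_term_def binomial_eq_0)
    next
      case (Suc j')
      then show ?thesis
        unfolding prod_eq coeff_eq coeff_sum_monom_atMost
        using qbinomial_term_Suc[where j = j' and m = m and y = y and z = z and q = q] vanish by (auto simp: le_Suc_eq)
    qed
  qed
qed

lemma pderiv_sum: "pderiv (sum f A) = (\<Sum>a\<in>A. pderiv (f a))"
  by (induction A rule: infinite_finite_induct) (simp_all add: pderiv_add)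

lemma sum_atMost_odd_split:
  fixes f :: "nat \<Rightarrow> 'a::comm_monoid_add"
  shows "(\<Sum>k\<le>Suc (2 * n). f k) = (\<Sum>j\<le>n. f (n - j) + f (Suc n + j))"
proof -
  have split: "{..Suc (2 * n)} = {..n} \<union> {Suc n..Suc n + n}" by auto
  have "(\<Sum>k\<le>Suc (2 * n). f k) = (\<Sum>k\<le>n. f k) + (\<Sum>k\<in>{Suc n..Suc n + n}. f k)"
    unfolding split by (rule sum.union_disjoint) auto
  also have "(\<Sum>k\<le>n. f k) = (\<Sum>j\<le>n. f (n - j))"
    using sum.atLeastAtMost_rev[of f 0 n] by (simp add: atLeast0AtMost)
  also have "(\<Sum>k\<in>{Suc n..Suc n + n}. f k) = (\<Sum>j\<le>n. f (Suc n + j))"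
    using sum.atLeastAtMost_shift_bounds[of f 0 "Suc n" n] by (simp add: atLeast0AtMost comp_def add.commute)
  finally show ?thesis by (simp add: sum.distrib)
qed

lemma prod_lessThan_odd_remove_middle:
  fixes g :: "nat \<Rightarrow> 'a::comm_monoid_mult"
  shows "(\<Prod>i\<in>{..<Suc (2 * n)} - {n}. g i) = (\<Prod>i<n. g i) * (\<Prod>j<n. g (Suc n + j))"
proof -
  have split: "{..<Suc (2 * n)} - {n} = {..<n} \<union> {Suc n..<Suc n + n}" by auto
  have "(\<Prod>i\<in>{..<Suc (2 * n)} - {n}. g i) = (\<Prod>i<n. g i) * (\<Prod>i\<in>{Suc n..<Suc n + n}. g i)"
    unfolding split by (rule prod.union_disjoint) auto
  also have "(\<Prod>i\<in>{Suc n..<Suc n + n}. g i) = (\<Prod>j<n. g (Suc n + j))"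
    using prod.atLeastLessThan_shift_bounds[of g 0 "Suc n" n] by (simp add: atLeast0LessThan comp_def add.commute)
  finally show ?thesis .
qed

lemma prod_power_diff_lower:
  fixes q :: "'a::comm_ring_1"
  shows "(\<Prod>i<n. q ^ (n + r) - q ^ i) = (-1) ^ n * q ^ (n choose 2) * (\<Prod>i<n. 1 - q ^ (Suc i + r))"
proof (induction n arbitrary: r)
  case (Suc n)
  let ?P = "\<Prod>i<n. 1 - q ^ (Suc i + Suc r)"
  have "(\<Prod>i<Suc n. q ^ (Suc n + r) - q ^ i) = (\<Prod>i<n. q ^ (n + Suc r) - q ^ i) * (q ^ (Suc n + r) - q ^ n)"
    by simp
  also have "\<dots> = (-1) ^ n * q ^ (n choose 2) * ?P * (- (q ^ n) * (1 - q ^ Suc r))"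
    using Suc.IH[of "Suc r"] by (simp add: algebra_simps power_add)
  also have "\<dots> = (-1) ^ Suc n * q ^ (Suc n choose 2) * ((1 - q ^ Suc r) * ?P)"
    by (simp add: choose_two_Suc power_add algebra_simps)
  also have "(1 - q ^ Suc r) * ?P = (\<Prod>i<Suc n. 1 - q ^ (Suc i + r))"
    unfolding prod.lessThan_Suc_shift by simp
  finally show ?case .
qed (simp add: binomial_eq_0)

lemma prod_power_diff_remove_middle:
  fixes q :: "'a::comm_ring_1"
  shows "(\<Prod>i\<in>{..<Suc (2 * n)} - {n}. q ^ n - q ^ i) = (-1) ^ n * q ^ ((n choose 2) + n * n) * qpoch q n ^ 2"
proof -
  have lower: "(\<Prod>i<n. q ^ n - q ^ i) = (-1) ^ n * q ^ (n choose 2) * qpoch q n"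
    using prod_power_diff_lower[of q n 0] by (simp add: qpoch_def)
  have "(\<Prod>j<n. q ^ n - q ^ (Suc n + j)) = (\<Prod>j<n. q ^ n * (1 - q ^ Suc j))"
    by (intro prod.cong) (simp_all add: algebra_simps power_add)
  also have "\<dots> = q ^ (n * n) * qpoch q n"
    by (simp add: prod.distrib qpoch_def power_mult)
  finally show ?thesis
    unfolding prod_lessThan_odd_remove_middle lower by (simp add: power_add power2_eq_square algebra_simps)
qed

(* Both sides are the derivative at x = 1 of the product in qbinomial_theorem with
   y = q^n and z = -1, whose only factor vanishing at x = 1 is the one with i = n. *)
lemma weighted_sum_qbinomial_terms:
  fixes q :: "'a::idom"
  shows "(\<Sum>k\<le>Suc (2 * n). of_nat k * qbinomial_term q (q ^ n) (-1) (Suc (2 * n)) k)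
    = - (q ^ n) * (\<Prod>i\<in>{..<Suc (2 * n)} - {n}. q ^ n - q ^ i)"
proof -
  let ?c = "qbinomial_term q (q ^ n) (-1) (Suc (2 * n))"
  let ?f = "\<lambda>i. [:q ^ n, - (q ^ i):]"
  let ?A = "{..<Suc (2 * n)}"
  let ?g = "\<lambda>a. poly (prod ?f (?A - {a}) * pderiv (?f a)) 1"
  have vanish: "?g a = 0" if "a \<in> ?A - {n}" for a
  proof -
    have "poly (prod ?f (?A - {a})) 1 = (\<Prod>i\<in>?A - {a}. poly (?f i) 1)"
      by (simp add: poly_prod)
    also have "\<dots> = 0"
      by (rule prod_zero) (use that in \<open>auto intro!: bexI[of _ n]\<close>)
    finally show ?thesis by simp
  qed
  have "(\<Sum>k\<le>Suc (2 * n). of_nat k * ?c k) = poly (pderiv (\<Sum>k\<le>Suc (2 * n). monom (?c k) k)) 1"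
    unfolding pderiv_sum pderiv_monom poly_sum poly_monom by simp
  also have "\<dots> = poly (pderiv (prod ?f ?A)) 1"
    using qbinomial_theorem[where m = "Suc (2 * n)" and y = "q ^ n" and z = "-1" and q = q] by simp
  also have "\<dots> = (\<Sum>a\<in>?A. ?g a)"
    unfolding pderiv_prod poly_sum by simp
  also have "\<dots> = ?g n + (\<Sum>a\<in>?A - {n}. ?g a)"
    using sum.remove[of ?A n ?g] by simp
  also have "(\<Sum>a\<in>?A - {n}. ?g a) = 0"
    using vanish by (intro sum.neutral) blast
  also have "?g n = - (q ^ n) * (\<Prod>i\<in>?A - {n}. q ^ n - q ^ i)"
    by (simp add: poly_prod pderiv_pCons)
  finally show ?thesis by simp
qed

lemma neg_one_power_diff: "j \<le> n \<Longrightarrow> (-1 :: 'a::comm_ring_1) ^ (n - j) = (-1) ^ n * (-1) ^ j"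
proof -
  assume "j \<le> n"
  then have "(-1 :: 'a) ^ n = (-1) ^ (n - j) * (-1) ^ j"
    by (simp flip: power_add)
  then show ?thesis by (simp add: mult.assoc)
qed

lemma choose_two_symmetric_exponent:
  assumes "k + s = Suc (2 * n)"
  shows "(s choose 2) + n * k = (k choose 2) + n * s"
proof -
  have k: "2 * int (k choose 2) + int k = int k * int k"
    using choose_two_double[of k] by (metis of_nat_add of_nat_mult of_nat_numeral)
  have s: "2 * int (s choose 2) + int s = int s * int s"
    using choose_two_double[of s] by (metis of_nat_add of_nat_mult of_nat_numeral)
  have "2 * (int (s choose 2) + int n * int k) - 2 * (int (k choose 2) + int n * int s)
      = (int s - int k) * (int k + int s - 2 * int n - 1)"
    using k s by (simp add: algebra_simps)
  also have "\<dots> = 0" using assms by simp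
  finally have "int ((s choose 2) + n * k) = int ((k choose 2) + n * s)" by simp
  then show ?thesis by (simp only: of_nat_eq_iff)
qed

lemma choose_two_exponent_shift:
  assumes "j \<le> n"
  shows "((n - j) choose 2) + n * (Suc n + j) = (Suc j choose 2) + ((n choose 2) + n * n + n)"
proof -
  obtain r where r: "n = j + r" using assms le_Suc_ex by blast
  have "2 * (j choose 2) + j = j * j" by (rule choose_two_double)
  then show ?thesis using r by (simp add: choose_two_add choose_two_Suc algebra_simps)
qed

lemma qbinomial_term_symmetric:
  fixes q :: "'a::idom"
  assumes qpoch: "\<And>n. qpoch q n \<noteq> 0" and k: "k \<le> Suc (2 * n)"
  shows "qbinomial_term q (q ^ n) (-1) (Suc (2 * n)) (Suc (2 * n) - k)
       = - qbinomial_term q (q ^ n) (-1) (Suc (2 * n)) k"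
proof -
  let ?m = "Suc (2 * n)"
  have exponent: "((?m - k) choose 2) + n * k = (k choose 2) + n * (?m - k)"
    using choose_two_symmetric_exponent[of k "?m - k" n] k by simp
  have "qbinomial_term q (q ^ n) (-1) ?m (?m - k) = q ^ (((?m - k) choose 2) + n * k) * qbinomial q ?m k * (-1) ^ (?m - k)"
    unfolding qbinomial_term_def qbinomial_symmetric[OF qpoch k] using k
    by (simp add: power_add power_mult[symmetric] mult_ac)
  also have "\<dots> = - (q ^ ((k choose 2) + n * (?m - k)) * qbinomial q ?m k * (-1) ^ k)"
    unfolding exponent neg_one_power_diff[OF k] by simp
  also have "\<dots> = - qbinomial_term q (q ^ n) (-1) ?m k"
    unfolding qbinomial_term_def by (simp add: power_add power_mult[symmetric] mult_ac)
  finally show ?thesis .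
qed

lemma weighted_sum_qbinomial_terms_paired:
  fixes q :: "'a::idom" and n :: nat
  assumes "\<And>n. qpoch q n \<noteq> 0"
  defines "c \<equiv> qbinomial_term q (q ^ n) (-1) (Suc (2 * n))"
  shows "(\<Sum>k\<le>Suc (2 * n). of_nat k * c k) = - (\<Sum>j\<le>n. of_nat (2 * j + 1) * c (n - j))"
proof -
  have "of_nat (n - j) * c (n - j) + of_nat (Suc n + j) * c (Suc n + j) = - (of_nat (2 * j + 1) * c (n - j))"
    if "j \<le> n" for j
  proof -
    have "c (Suc n + j) = c (Suc (2 * n) - (n - j))"
      using that by (simp add: Suc_diff_le)
    also have "\<dots> = - c (n - j)"
      unfolding c_def using qbinomial_term_symmetric[OF assms(1), of "n - j" n] by simp
    finally have "c (Suc n + j) = - c (n - j)" .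
    then have "of_nat (n - j) * c (n - j) + of_nat (Suc n + j) * c (Suc n + j)
        = (of_nat (n - j) - of_nat (Suc n + j)) * c (n - j)"
      by (simp add: left_diff_distrib)
    also have "(of_nat (n - j) :: 'a) - of_nat (Suc n + j) = - of_nat (2 * j + 1)"
      using that by (simp add: of_nat_diff algebra_simps)
    finally show ?thesis by (simp add: algebra_simps)
  qed
  then show ?thesis
    unfolding sum_atMost_odd_split[of _ n] by (simp add: sum_negf)
qed

(* As n tends to infinity this becomes Jacobi's identity for prod (1 - q^k)^3. *)
theorem finite_jacobi_identity:
  fixes q :: "'a::idom"
  assumes "q \<noteq> 0" and qpoch: "\<And>n. qpoch q n \<noteq> 0"
  shows "(\<Sum>j\<le>n. of_nat (2 * j + 1) * (-1) ^ j * q ^ (Suc j choose 2) * qbinomial q (Suc (2 * n)) (n - j))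
       = qpoch q n ^ 2"
    (is "?S = _")
proof -
  let ?m = "Suc (2 * n)"
  let ?c = "qbinomial_term q (q ^ n) (-1) ?m"
  let ?Q = "q ^ ((n choose 2) + n * n + n)"
  have shifted_term: "?c (n - j) = (-1) ^ n * ((-1) ^ j * q ^ (Suc j choose 2) * qbinomial q ?m (n - j)) * ?Q"
    if "j \<le> n" for j
  proof -
    have "?m - (n - j) = Suc n + j" using that by simp
    then have "?c (n - j) = q ^ (((n - j) choose 2) + n * (Suc n + j)) * qbinomial q ?m (n - j) * (-1) ^ (n - j)"
      unfolding qbinomial_term_def by (simp add: power_add power_mult mult_ac)
    then show ?thesis
      unfolding choose_two_exponent_shift[OF that] neg_one_power_diff[OF that] by (simp add: power_add mult_ac)
  qed
  have "(-1) ^ n * ?S * ?Q = (\<Sum>j\<le>n. of_nat (2 * j + 1) * ?c (n - j))"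
    unfolding sum_distrib_left sum_distrib_right
    by (intro sum.cong refl, subst shifted_term) (auto simp: mult_ac)
  also have "\<dots> = q ^ n * (\<Prod>i\<in>{..<?m} - {n}. q ^ n - q ^ i)"
    using weighted_sum_qbinomial_terms_paired[OF qpoch, of n] weighted_sum_qbinomial_terms[where n = n and q = q] by simp
  also have "\<dots> = (-1) ^ n * qpoch q n ^ 2 * ?Q"
    unfolding prod_power_diff_remove_middle by (simp add: power_add mult_ac)
  finally show ?thesis using assms(1) by simp
qed

lemma qpoch_mult_qbinomial:
  fixes q :: "'a::idom"
  assumes qpoch: "\<And>n. qpoch q n \<noteq> 0" and j: "j \<le> n"
  shows "qpoch q n * qbinomial q (Suc (2 * n)) (n - j)
    = (\<Prod>i\<in>{n - j..<n}. 1 - q ^ Suc i) * (\<Prod>i\<in>{Suc (n + j)..<Suc (2 * n)}. 1 - q ^ Suc i)"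
proof -
  let ?upper = "\<Prod>i\<in>{Suc (n + j)..<Suc (2 * n)}. 1 - q ^ Suc i"
  have "qbinomial q (Suc (2 * n)) (n - j) * qpoch q (n - j) * qpoch q (Suc (n + j)) = qpoch q (Suc (2 * n))"
    using qbinomial_mult_qpoch[of "n - j" "Suc (2 * n)" q] j by (simp add: Suc_diff_le)
  also have "\<dots> = ?upper * qpoch q (Suc (n + j))"
    using qpoch_split[of "Suc (n + j)" "Suc (2 * n)" q] j by (simp add: mult.commute)
  finally have "qbinomial q (Suc (2 * n)) (n - j) * qpoch q (n - j) = ?upper"
    using qpoch by simp
  moreover have "qpoch q n = qpoch q (n - j) * (\<Prod>i\<in>{n - j..<n}. 1 - q ^ Suc i)"
    using qpoch_split[of "n - j" n q] by simp
  ultimately show ?thesis by (simp add: mult_ac)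
qed

lemma fps_cong_prod_one_minus_X_power:
  assumes "\<And>i. i \<in> S \<Longrightarrow> a \<le> i"
  shows "fps_cong m (d * Suc a) (\<Prod>i\<in>S. 1 - (fps_X ^ d) ^ Suc i) 1"
proof -
  have "fps_cong m (d * Suc a) (\<Prod>i\<in>S. 1 - (fps_X ^ d) ^ Suc i) (\<Prod>i\<in>S. 1)"
  proof (rule fps_cong_prod)
    fix i assume "i \<in> S"
    then have "d * Suc a \<le> d * Suc i" using assms by simp
    then show "fps_cong m (d * Suc a) (1 - (fps_X ^ d) ^ Suc i) 1"
      unfolding power_mult[symmetric] by (rule fps_cong_one_minus_X_power_one)
  qed
  then show ?thesis by simp
qed

lemma fps_cong_jacobi_summand:
  fixes d :: nat
  assumes "d > 0" "j \<le> n"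
  defines "q \<equiv> fps_X ^ d :: 'a::idom fps"
  shows "fps_cong 0 (d * Suc n) (fps_X ^ (d * (Suc j choose 2)) * (qpoch q n * qbinomial q (Suc (2 * n)) (n - j)))
           (fps_X ^ (d * (Suc j choose 2)))"
proof -
  let ?e = "d * (Suc j choose 2)"
  have qpoch: "qpoch q k \<noteq> 0" for k
    unfolding q_def using assms(1) by (intro qpoch_fps_nonzero) simp
  have "fps_cong 0 (d * Suc (n - j)) (qpoch q n * qbinomial q (Suc (2 * n)) (n - j)) (1 * 1)"
    unfolding qpoch_mult_qbinomial[OF qpoch assms(2)] unfolding q_def
    by (intro fps_cong_mult fps_cong_prod_one_minus_X_power) auto
  then have "fps_cong 0 (d * Suc (n - j) + ?e)
      (fps_X ^ ?e * (qpoch q n * qbinomial q (Suc (2 * n)) (n - j))) (fps_X ^ ?e)"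
    using fps_cong_mult_X_power by fastforce
  moreover have "Suc n \<le> Suc (n - j) + (Suc j choose 2)"
    using le_choose_two_Suc[of j] assms(2) by linarith
  then have "d * Suc n \<le> d * Suc (n - j) + ?e"
    by (metis distrib_left mult_le_mono2)
  ultimately show ?thesis
    by (rule fps_cong_mono)
qed

theorem jacobi_cube_fps_cong:
  fixes d :: nat
  assumes "d > 0"
  shows "fps_cong 0 (d * Suc n) (qpoch (fps_X ^ d :: 'a::idom fps) n ^ 3)
           (\<Sum>j\<le>n. of_nat (2 * j + 1) * (-1) ^ j * fps_X ^ (d * (Suc j choose 2)))"
proof -
  let ?q = "fps_X ^ d :: 'a fps"
  have qpoch: "qpoch ?q k \<noteq> 0" for k
    using assms by (intro qpoch_fps_nonzero) simp
  have "?q \<noteq> 0" by simp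
  have "qpoch ?q n ^ 3 = qpoch ?q n * qpoch ?q n ^ 2"
    by (simp add: power_numeral_reduce)
  also have "\<dots> = (\<Sum>j\<le>n. of_nat (2 * j + 1) * (-1) ^ j
      * (fps_X ^ (d * (Suc j choose 2)) * (qpoch ?q n * qbinomial ?q (Suc (2 * n)) (n - j))))"
    unfolding finite_jacobi_identity[OF \<open>?q \<noteq> 0\<close> qpoch, symmetric] sum_distrib_left
    by (simp add: mult_ac power_mult)
  finally show ?thesis
    using fps_cong_jacobi_summand[OF assms] by (auto intro!: fps_cong_sum fps_cong_mult_left)
qed

section \<open>The q-expansion of f modulo 4\<close>

definition psi_trunc :: "nat \<Rightarrow> nat \<Rightarrow> int fps" where
  "psi_trunc d n = (\<Sum>j\<le>n. fps_X ^ (d * (Suc j choose 2)))"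

lemma odd_times_sign_cong_1_mod_4: "4 dvd int (2 * j + 1) * (-1) ^ j - 1"
proof (cases "even j")
  case True
  then obtain r where "j = 2 * r" by blast
  then have "int (2 * j + 1) * (-1) ^ j - 1 = 4 * int r" by simp
  then show ?thesis by (simp only: dvd_triv_left)
next
  case False
  then obtain r where "j = 2 * r + 1" using oddE by blast
  then have "int (2 * j + 1) * (-1) ^ j - 1 = 4 * (- int r - 1)" by simp
  then show ?thesis by (simp only: dvd_triv_left)
qed

corollary jacobi_cube_mod_4:
  assumes "d > 0"
  shows "fps_cong 4 (d * Suc n) (qpoch (fps_X ^ d :: int fps) n ^ 3) (psi_trunc d n)"
proof -
  have "fps_cong 4 (d * Suc n) (\<Sum>j\<le>n. of_nat (2 * j + 1) * (-1) ^ j * fps_X ^ (d * (Suc j choose 2)))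
      (psi_trunc d n)"
    unfolding psi_trunc_def
  proof (rule fps_cong_sum)
    fix j
    obtain t where t: "int (2 * j + 1) * (-1) ^ j = 1 + 4 * t"
      using odd_times_sign_cong_1_mod_4[of j] by (auto simp: algebra_simps elim!: dvdE)
    have "(of_nat (2 * j + 1) * (-1) ^ j :: int fps) = of_int (int (2 * j + 1) * (-1) ^ j)"
      by simp
    also have "\<dots> = 1 + fps_const 4 * fps_const t"
      unfolding t fps_of_int[symmetric] by (simp flip: fps_const_mult fps_const_add)
    finally show "fps_cong 4 (d * Suc n) (of_nat (2 * j + 1) * (-1) ^ j * fps_X ^ (d * (Suc j choose 2)) :: int fps)
        (fps_X ^ (d * (Suc j choose 2)))"
      by (intro fps_cong_if_eq_plus_multiple[where C = "fps_const t * fps_X ^ (d * (Suc j choose 2))"])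
        (simp add: algebra_simps)
  qed
  then show ?thesis
    using fps_cong_trans[OF fps_cong_dvd[OF jacobi_cube_fps_cong[OF assms]]] by simp
qed

lemma fps_cong_one_minus_square: "fps_cong 2 N ((1 - y) ^ 2) (1 - y ^ 2)"
  by (rule fps_cong_if_eq_plus_multiple[where C = "y ^ 2 - y"])
    (simp add: power2_eq_square numeral_fps_const algebra_simps)

lemma fps_cong_one_minus_power_two_power: "fps_cong 2 N ((1 - y) ^ (2 ^ k)) (1 - y ^ (2 ^ k))"
proof (induction k)
  case (Suc k)
  have "fps_cong 2 N (((1 - y) ^ (2 ^ k)) ^ 2) ((1 - y ^ (2 ^ k)) ^ 2)"
    using Suc.IH by (rule fps_cong_power)
  also have "fps_cong 2 N ((1 - y ^ (2 ^ k)) ^ 2) (1 - (y ^ (2 ^ k)) ^ 2)"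
    by (rule fps_cong_one_minus_square)
  finally show ?case
    by (simp only: power_Suc2 power_mult)
qed simp

lemma qpoch_power: "qpoch (q ^ d) L = (\<Prod>k\<in>{1..L}. 1 - (q ^ k) ^ d)"
proof -
  have "(q ^ d) ^ Suc i = (q ^ Suc i) ^ d" for i
    by (simp only: power_mult[symmetric] mult.commute)
  then have "qpoch (q ^ d) L = (\<Prod>i<L. 1 - (q ^ Suc i) ^ d)"
    unfolding qpoch_def by simp
  also have "\<dots> = (\<Prod>k\<in>{1..L}. 1 - (q ^ k) ^ d)"
    using prod.atLeast1_atMost_eq[of "\<lambda>k. 1 - (q ^ k) ^ d" L] by (simp only: One_nat_def)
  finally show ?thesis .
qed

lemma Delta_fps_cong: "fps_cong 0 (Suc L) Delta (fps_X * (\<Prod>k\<in>{1..L}. (1 - fps_X ^ k) ^ 24))"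
proof (rule fps_cong_if_nth_eq)
  fix i assume "i < Suc L"
  let ?P = "\<lambda>L. \<Prod>k\<in>{1..L}. (1 - fps_X ^ k) ^ 24 :: int fps"
  have "{1..L} = {1..i} \<union> {Suc i..L}" using \<open>i < Suc L\<close> by auto
  then have "?P L = ?P i * (\<Prod>k\<in>{Suc i..L}. (1 - fps_X ^ k) ^ 24)"
    by (simp add: prod.union_disjoint)
  moreover have "fps_cong 0 (Suc i) (\<Prod>k\<in>{Suc i..L}. (1 - fps_X ^ k) ^ 24) (\<Prod>k\<in>{Suc i..L}. 1 ^ 24)"
    by (intro fps_cong_prod fps_cong_power fps_cong_one_minus_X_power_one) simp
  ultimately have "fps_cong 0 (Suc i) (fps_X * ?P L) (fps_X * ?P i)"
    using fps_cong_mult_left[of 0 "Suc i" _ 1 "fps_X * ?P i"] by (simp add: mult.assoc)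
  then have "fps_nth (fps_X * ?P L) i = fps_nth (fps_X * ?P i) i"
    using fps_cong_nth[of 0 "Suc i" "fps_X * ?P L" "fps_X * ?P i" i] by (simp only: cong_0 lessI)
  then show "fps_nth Delta i = fps_nth (fps_X * ?P L) i"
    by (simp add: Delta_def)
qed

lemma Delta_mod_4: "fps_cong 4 (Suc L) Delta (fps_X * psi_trunc 4 L ^ 2)"
proof -
  have "fps_cong 2 N ((1 - y) ^ 4) (1 - y ^ 4)" for N and y :: "int fps"
    using fps_cong_one_minus_power_two_power[of N y 2] by simp
  then have "fps_cong 4 N (((1 - y) ^ 4) ^ 2) ((1 - y ^ 4) ^ 2)" for N and y :: "int fps"
    by (rule fps_cong_2_square)
  then have "fps_cong 4 N ((1 - y) ^ 24) (((1 - y ^ 4) ^ 3) ^ 2)" for N and y :: "int fps"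
    using fps_cong_power[of 4 N "((1 - y) ^ 4) ^ 2" "(1 - y ^ 4) ^ 2" 3] by (simp flip: power_mult)
  then have "fps_cong 4 (Suc L) (\<Prod>k\<in>{1..L}. (1 - fps_X ^ k) ^ 24 :: int fps) (\<Prod>k\<in>{1..L}. ((1 - (fps_X ^ k) ^ 4) ^ 3) ^ 2)"
    by (intro fps_cong_prod)
  also have "(\<Prod>k\<in>{1..L}. ((1 - (fps_X ^ k) ^ 4) ^ 3) ^ 2) = (qpoch (fps_X ^ 4) L ^ 3) ^ 2"
    unfolding qpoch_power prod_power_distrib ..
  also have "fps_cong 4 (Suc L) \<dots> (psi_trunc 4 L ^ 2)"
    by (intro fps_cong_power fps_cong_mono[OF jacobi_cube_mod_4]) simp_all
  finally show ?thesis
    using fps_cong_trans[OF fps_cong_dvd[OF Delta_fps_cong] fps_cong_mult_left] by simp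
qed

lemma Delta_cube_mod_2: "fps_cong 2 (Suc L) (Delta ^ 3) (fps_X ^ 3 * (psi_trunc 8 L * psi_trunc 16 L))"
proof -
  have factor: "fps_cong 2 N ((1 - y) ^ 72) ((1 - y ^ 8) ^ 3 * (1 - y ^ 16) ^ 3)" for N and y :: "int fps"
  proof -
    have "fps_cong 2 N ((1 - y) ^ 8) (1 - y ^ 8)"
      using fps_cong_one_minus_power_two_power[of N y 3] by simp
    then have "fps_cong 2 N (((1 - y) ^ 8) ^ 9) ((1 - y ^ 8) ^ 9)"
      by (rule fps_cong_power)
    also have "(1 - y ^ 8) ^ 9 = (1 - y ^ 8) ^ 3 * ((1 - y ^ 8) ^ 2) ^ 3"
      by (simp flip: power_mult power_add)
    also have "fps_cong 2 N \<dots> ((1 - y ^ 8) ^ 3 * (1 - y ^ 16) ^ 3)"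
      using fps_cong_one_minus_square[of N "y ^ 8"]
      by (intro fps_cong_mult_left fps_cong_power) (simp flip: power_mult)
    finally show ?thesis by (simp flip: power_mult)
  qed
  have "fps_cong 2 (Suc L) (\<Prod>k\<in>{1..L}. ((1 - fps_X ^ k) ^ 24) ^ 3 :: int fps)
      (\<Prod>k\<in>{1..L}. (1 - (fps_X ^ k) ^ 8) ^ 3 * (1 - (fps_X ^ k) ^ 16) ^ 3)"
  proof (rule fps_cong_prod)
    fix k
    show "fps_cong 2 (Suc L) (((1 - fps_X ^ k) ^ 24) ^ 3 :: int fps)
        ((1 - (fps_X ^ k) ^ 8) ^ 3 * (1 - (fps_X ^ k) ^ 16) ^ 3)"
      using factor[of "Suc L" "fps_X ^ k"] by (simp flip: power_mult)
  qed
  also have "(\<Prod>k\<in>{1..L}. (1 - (fps_X ^ k) ^ 8) ^ 3 * (1 - (fps_X ^ k) ^ 16) ^ 3)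
      = qpoch (fps_X ^ 8) L ^ 3 * qpoch (fps_X ^ 16) L ^ 3"
    unfolding qpoch_power prod_power_distrib prod.distrib ..
  also have "fps_cong 2 (Suc L) \<dots> (psi_trunc 8 L * psi_trunc 16 L)"
    by (intro fps_cong_mult fps_cong_mono[OF fps_cong_dvd[OF jacobi_cube_mod_4]]) simp_all
  finally have "fps_cong 2 (Suc L) ((\<Prod>k\<in>{1..L}. (1 - fps_X ^ k) ^ 24) ^ 3) (psi_trunc 8 L * psi_trunc 16 L)"
    by (simp add: prod_power_distrib)
  then have "fps_cong 2 (Suc L) ((fps_X * (\<Prod>k\<in>{1..L}. (1 - fps_X ^ k) ^ 24)) ^ 3)
      (fps_X ^ 3 * (psi_trunc 8 L * psi_trunc 16 L))"
    unfolding power_mult_distrib by (rule fps_cong_mult_left)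
  then show ?thesis
    using fps_cong_trans[OF fps_cong_power[OF fps_cong_dvd[OF Delta_fps_cong]]] by simp
qed

lemma E4_mod_4: "fps_cong 4 N E4 1"
proof (rule fps_cong_if_eq_plus_multiple)
  show "E4 = 1 + fps_const 4 * Abs_fps (\<lambda>n. if n = 0 then 0 else 60 * sigma3 n)"
    unfolding E4_def by (rule fps_ext) simp
qed

lemma f_form_mod_4:
  "fps_cong 4 (Suc L) f_form (fps_X * psi_trunc 4 L ^ 2 + 2 * (fps_X ^ 3 * (psi_trunc 8 L * psi_trunc 16 L)))"
proof -
  have "fps_cong 4 (Suc L) (E4 ^ 6 * Delta) (1 ^ 6 * (fps_X * psi_trunc 4 L ^ 2))"
    by (intro fps_cong_mult fps_cong_power E4_mod_4 Delta_mod_4)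
  moreover have "fps_cong 4 (Suc L) (2 * Delta ^ 3) (2 * (fps_X ^ 3 * (psi_trunc 8 L * psi_trunc 16 L)))"
    by (rule fps_cong_double[OF Delta_cube_mod_2])
  ultimately show ?thesis
    unfolding f_form_def using fps_cong_add by fastforce
qed

lemma fps_nth_X_power_mult_psi_trunc_mult:
  "fps_nth (fps_X ^ c * (psi_trunc d L * psi_trunc e L)) n
     = int (card {(a, b) \<in> {..L} \<times> {..L}. c + d * (Suc a choose 2) + e * (Suc b choose 2) = n})"
proof -
  let ?g = "\<lambda>p. c + d * (Suc (fst p) choose 2) + e * (Suc (snd p) choose 2)"
  have "psi_trunc d L * psi_trunc e L
      = (\<Sum>p\<in>{..L} \<times> {..L}. fps_X ^ (d * (Suc (fst p) choose 2) + e * (Suc (snd p) choose 2)))"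
    unfolding psi_trunc_def sum_product sum.cartesian_product by (simp add: power_add case_prod_beta)
  then have "fps_X ^ c * (psi_trunc d L * psi_trunc e L) = (\<Sum>p\<in>{..L} \<times> {..L}. fps_X ^ ?g p :: int fps)"
    by (simp add: sum_distrib_left power_add add.assoc)
  then have "fps_nth (fps_X ^ c * (psi_trunc d L * psi_trunc e L)) n
      = (\<Sum>p\<in>{..L} \<times> {..L}. if n = ?g p then 1 else 0)"
    by (simp add: fps_sum_nth)
  also have "\<dots> = int (card ({..L} \<times> {..L} \<inter> {p. n = ?g p}))"
    by (simp add: sum.If_cases)
  also have "{..L} \<times> {..L} \<inter> {p. n = ?g p}
      = {(a, b) \<in> {..L} \<times> {..L}. c + d * (Suc a choose 2) + e * (Suc b choose 2) = n}"
    by auto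
  finally show ?thesis .
qed

definition odd_reps :: "nat \<Rightarrow> nat \<Rightarrow> nat" where
  "odd_reps k n = card {(x, y). odd x \<and> odd y \<and> x ^ 2 + k * y ^ 2 = n}"

lemma odd_reps_eq_card_atMost:
  assumes "k \<ge> 1" "n \<le> 2 * L + 1"
  shows "odd_reps k n = card {(a, b) \<in> {..L} \<times> {..L}. (2 * a + 1) ^ 2 + k * (2 * b + 1) ^ 2 = n}"
proof -
  let ?S = "{(a, b) \<in> {..L} \<times> {..L}. (2 * a + 1) ^ 2 + k * (2 * b + 1) ^ 2 = n}"
  let ?odd = "\<lambda>(a, b). (2 * a + 1, 2 * b + 1 :: nat)"
  have "(x, y) \<in> ?odd ` ?S" if xy: "odd x" "odd y" "x ^ 2 + k * y ^ 2 = n" for x y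
  proof -
    obtain a b where ab: "x = 2 * a + 1" "y = 2 * b + 1" using xy(1,2) by (metis oddE)
    have "x \<le> x ^ 2" "y \<le> k * y ^ 2"
      using assms(1) by (simp_all add: power2_eq_square)
    then have "a \<le> L" "b \<le> L" using xy(3) ab assms(2) by linarith+
    then show ?thesis using ab xy(3) by force
  qed
  then have "{(x, y). odd x \<and> odd y \<and> x ^ 2 + k * y ^ 2 = n} \<subseteq> ?odd ` ?S"
    by blast
  moreover have "?odd ` ?S \<subseteq> {(x, y). odd x \<and> odd y \<and> x ^ 2 + k * y ^ 2 = n}"
    by auto
  moreover have "inj_on ?odd ?S"
    by (auto simp: inj_on_def)
  ultimately show ?thesis
    unfolding odd_reps_def by (metis (no_types, lifting) card_image subset_antisym)
qed

lemma f_form_nth_cong_odd_reps: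
  "[fps_nth f_form l = int (odd_reps 1 (2 * l)) + 2 * int (odd_reps 2 l)] (mod 4)"
proof -
  have "{(a, b) \<in> {..l} \<times> {..l}. 1 + 4 * (Suc a choose 2) + 4 * (Suc b choose 2) = l}
      = {(a, b) \<in> {..l} \<times> {..l}. (2 * a + 1) ^ 2 + 1 * (2 * b + 1) ^ 2 = 2 * l}"
    by (simp only: odd_square_eq_choose_two) auto
  then have "fps_nth (fps_X ^ 1 * (psi_trunc 4 l * psi_trunc 4 l)) l = int (odd_reps 1 (2 * l))"
    by (simp only: fps_nth_X_power_mult_psi_trunc_mult odd_reps_eq_card_atMost[of 1 "2 * l" l])
  moreover have "{(a, b) \<in> {..l} \<times> {..l}. 3 + 8 * (Suc a choose 2) + 16 * (Suc b choose 2) = l}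
      = {(a, b) \<in> {..l} \<times> {..l}. (2 * a + 1) ^ 2 + 2 * (2 * b + 1) ^ 2 = l}"
    by (simp only: odd_square_eq_choose_two) auto
  then have "fps_nth (fps_X ^ 3 * (psi_trunc 8 l * psi_trunc 16 l)) l = int (odd_reps 2 l)"
    by (simp only: fps_nth_X_power_mult_psi_trunc_mult odd_reps_eq_card_atMost[of 2 l l])
  moreover have "[fps_nth f_form l
      = fps_nth (fps_X ^ 1 * (psi_trunc 4 l * psi_trunc 4 l) + 2 * (fps_X ^ 3 * (psi_trunc 8 l * psi_trunc 16 l))) l] (mod 4)"
    using fps_cong_nth[OF f_form_mod_4[of l]] by (simp add: power2_eq_square)
  ultimately show ?thesis
    by (simp add: numeral_fps_const)
qed

section \<open>Representations of primes by x^2 + y^2 and x^2 + 2 y^2\<close>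

lemma thue_lemma:
  fixes p s :: nat and t :: int
  assumes "0 < p" "p < (s + 1) ^ 2"
  obtains x y :: int where "x \<noteq> 0 \<or> y \<noteq> 0" "\<bar>x\<bar> \<le> int s" "\<bar>y\<bar> \<le> int s" "int p dvd x - t * y"
proof -
  let ?D = "{0..int s} \<times> {0..int s}"
  let ?f = "\<lambda>u. (fst u - t * snd u) mod int p"
  have "card (?f ` ?D) \<le> card {0..<int p}"
    using assms(1) by (intro card_mono) auto
  also have "\<dots> < card ?D"
    using assms(2) by (simp add: card_cartesian_product power2_eq_square nat_add_distrib)
  finally have "\<not> inj_on ?f ?D"
    using pigeonhole by blast
  then obtain u v where uv: "u \<in> ?D" "v \<in> ?D" "u \<noteq> v" "?f u = ?f v"
    unfolding inj_on_def by blast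
  have "int p dvd (fst u - t * snd u) - (fst v - t * snd v)"
    using uv(4) by (simp add: mod_eq_dvd_iff)
  moreover have "(fst u - t * snd u) - (fst v - t * snd v) = (fst u - fst v) - t * (snd u - snd v)"
    by (simp add: algebra_simps)
  moreover have "fst u - fst v \<noteq> 0 \<or> snd u - snd v \<noteq> 0"
    using uv(3) by (auto simp: prod_eq_iff)
  moreover have "\<bar>fst u - fst v\<bar> \<le> int s" "\<bar>snd u - snd v\<bar> \<le> int s"
    using uv(1,2) by auto
  ultimately show ?thesis
    using that by metis
qed

lemma prime_not_square: "prime (p :: 'a::factorial_semiring) \<Longrightarrow> p \<noteq> x ^ 2"
  by (auto simp: prime_power_iff)

lemma thue_lemma_prime:
  fixes p :: nat and t :: int
  assumes p: "prime p"
  obtains x y :: int where "x \<noteq> 0 \<or> y \<noteq> 0" "x ^ 2 < int p" "y ^ 2 < int p" "int p dvd x - t * y"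
proof -
  let ?s = "floor_sqrt p"
  have "?s ^ 2 \<noteq> p"
    using prime_not_square[OF p, of ?s] by simp
  then have "?s ^ 2 < p"
    using floor_sqrt_power2_le[of p] by linarith
  then have s_p: "int ?s ^ 2 < int p"
    by (metis of_nat_less_iff of_nat_power)
  have "p < (?s + 1) ^ 2"
    using Suc_floor_sqrt_power2_gt[of p] by simp
  then obtain x y where xy: "x \<noteq> 0 \<or> y \<noteq> 0" "\<bar>x\<bar> \<le> int ?s" "\<bar>y\<bar> \<le> int ?s" "int p dvd x - t * y"
    using thue_lemma[OF prime_gt_0_nat[OF p]] by blast
  have "x ^ 2 \<le> int ?s ^ 2" "y ^ 2 \<le> int ?s ^ 2"
    using xy(2,3) abs_le_square_iff[of x "int ?s"] abs_le_square_iff[of y "int ?s"] by simp_all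
  then have "x ^ 2 < int p" "y ^ 2 < int p"
    using s_p by linarith+
  then show ?thesis
    using that xy(1,4) by blast
qed

lemma prime_multiple_eq_square_plus_k_square:
  fixes p :: nat and k t :: int
  assumes p: "prime p" and k: "k = 1 \<or> k = 2" and t: "int p dvd t ^ 2 + k"
  obtains x y q :: int where "x ^ 2 + k * y ^ 2 = int p * q" "0 < q" "q \<le> k"
proof -
  obtain x y where xy: "x \<noteq> 0 \<or> y \<noteq> 0" "x ^ 2 < int p" "y ^ 2 < int p" "int p dvd x - t * y"
    using thue_lemma_prime[OF p] by blast
  have "x ^ 2 + k * y ^ 2 = (x - t * y) * (x + t * y) + (t ^ 2 + k) * y ^ 2"
    by (simp add: power2_eq_square algebra_simps)
  then have "int p dvd x ^ 2 + k * y ^ 2"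
    using xy(4) t by simp
  then obtain q where q: "x ^ 2 + k * y ^ 2 = int p * q"
    by blast
  have k_pos: "0 < k" using k by auto
  have "0 < x ^ 2 + k * y ^ 2"
  proof (cases "x = 0")
    case True
    then show ?thesis using xy(1) k_pos by simp
  next
    case False
    then show ?thesis using k_pos by (simp add: add_pos_nonneg)
  qed
  then have "0 < q"
    using q by (simp add: zero_less_mult_iff)
  have "k * y ^ 2 \<le> k * int p"
    using xy(3) k_pos by simp
  then have "int p * q < int p * (1 + k)"
    using q xy(2) by (simp add: algebra_simps)
  then have "q < 1 + k"
    using prime_gt_0_nat[OF p] by simp
  then show ?thesis
    using that q \<open>0 < q\<close> by simp
qed

lemma prime_eq_square_plus_k_square:
  fixes p k :: nat and t :: int
  assumes p: "prime p" and k: "k = 1 \<or> k = 2" and t: "int p dvd t ^ 2 + int k"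
  obtains x y :: nat where "x ^ 2 + k * y ^ 2 = p"
proof -
  obtain x y q :: int where q: "x ^ 2 + int k * y ^ 2 = int p * q" "0 < q" "q \<le> int k"
    using prime_multiple_eq_square_plus_k_square[OF p _ t] k by auto
  have "\<exists>x y :: int. x ^ 2 + int k * y ^ 2 = int p"
  proof (cases "q = 1")
    case False
    then have "k = 2" "q = 2" using q(2,3) k by auto
    then have "x ^ 2 = 2 * (int p - y ^ 2)"
      using q(1) by (simp add: algebra_simps)
    then have "even x"
      by (metis dvd_triv_left even_power zero_less_numeral)
    then obtain z where "x = 2 * z" ..
    then have "y ^ 2 + int k * z ^ 2 = int p"
      using q(1) \<open>k = 2\<close> \<open>q = 2\<close> by (simp add: power2_eq_square algebra_simps)
    then show ?thesis by blast
  qed (use q(1) in auto)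
  then obtain x y :: int where "x ^ 2 + int k * y ^ 2 = int p" by blast
  then have "int (nat \<bar>x\<bar> ^ 2 + k * nat \<bar>y\<bar> ^ 2) = int p"
    by simp
  then show ?thesis
    using that of_nat_eq_iff by blast
qed

lemma square_root_mod_prime_if_euler:
  fixes a :: int
  assumes p: "prime p" "2 < p" and a: "\<not> [a = 0] (mod int p)"
    and euler: "[a ^ ((p - 1) div 2) = 1] (mod int p)"
  obtains t where "int p dvd t ^ 2 - a"
proof -
  have Legendre: "[Legendre a (int p) = 1] (mod int p)"
    using cong_trans[OF euler_criterion[OF p, of a] euler] .
  have "QuadRes (int p) a"
  proof (rule ccontr)
    assume "\<not> QuadRes (int p) a"
    then have "[-1 = 1] (mod int p)"
      using Legendre a by (simp add: Legendre_def)
    then have "int p dvd 2"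
      by (simp add: cong_iff_dvd_diff)
    then have "p dvd 2"
      by presburger
    then show False
      using p(2) dvd_imp_le[of p 2] by simp
  qed
  then obtain y where "[y ^ 2 = a] (mod int p)"
    unfolding QuadRes_def by blast
  then show ?thesis
    using that by (simp add: cong_iff_dvd_diff)
qed

lemma GAUSS_two:
  assumes "prime p" "2 < p"
  shows "GAUSS p 2"
proof
  show "[2 \<noteq> 0] (mod int p)"
  proof
    assume "[2 = 0] (mod int p)"
    then have "int p dvd 2"
      by (simp add: cong_0_iff)
    then have "p dvd 2"
      by presburger
    then show False
      using assms(2) dvd_imp_le[of p 2] by simp
  qed
qed (use assms in simp_all)

lemma minus_one_square_mod_prime:
  assumes p: "prime p" "p mod 4 = 1"
  obtains t where "int p dvd t ^ 2 + 1"
proof -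
  have "2 < p"
    using p prime_gt_1_nat[OF p(1)] by presburger
  have "\<not> [-1 = 0] (mod int p)"
    using \<open>2 < p\<close> by (simp add: cong_0_iff)
  moreover have "even ((p - 1) div 2)"
    using p(2) by presburger
  then have "[(-1) ^ ((p - 1) div 2) = 1] (mod int p)"
    by simp
  ultimately obtain t where "int p dvd t ^ 2 - (-1)"
    using square_root_mod_prime_if_euler[OF p(1) \<open>2 < p\<close>] by blast
  then show ?thesis
    using that by simp
qed

lemma card_GAUSS_E_two:
  assumes p: "prime p" "p = 8 * m + 3"
  shows "card (GAUSS.E p 2) = 2 * m + 1"
proof -
  interpret GAUSS p 2
    using p by (intro GAUSS_two) simp_all
  have half: "(int p - 1) div 2 = int (4 * m + 1)"
    using p(2) by simp
  have "C = (\<lambda>x. x mod int p) ` (\<lambda>x. x * 2) ` {0<..int (4 * m + 1)}"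
    unfolding C_def B_def A_def half ..
  also have "\<dots> = (\<lambda>x. x * 2) ` {0<..int (4 * m + 1)}"
    unfolding image_image
  proof (rule image_cong[OF refl])
    fix x assume "x \<in> {0<..int (4 * m + 1)}"
    then show "x * 2 mod int p = x * 2"
      using p(2) by (intro mod_pos_pos_trivial) auto
  qed
  finally have "E = (\<lambda>x. x * 2) ` {int (2 * m + 1)..int (4 * m + 1)}"
    unfolding E_def half by (auto simp: image_iff)
  then have "card E = card {int (2 * m + 1)..int (4 * m + 1)}"
    by (simp add: card_image inj_on_def)
  then show ?thesis by simp
qed

lemma minus_two_square_mod_prime:
  assumes p: "prime p" "p mod 8 = 3"
  obtains t where "int p dvd t ^ 2 + 2"
proof -
  obtain m where m: "p = 8 * m + 3"
    using p(2) by (metis div_mod_decomp mult.commute)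
  then have "2 < p" by simp
  interpret GAUSS p 2
    using p(1) \<open>2 < p\<close> by (rule GAUSS_two)
  have half: "nat ((int p - 1) div 2) = 4 * m + 1" "(p - 1) div 2 = 4 * m + 1"
    using m by simp_all
  have "[2 ^ (4 * m + 1) = -1] (mod int p)"
    using pre_gauss_lemma card_GAUSS_E_two[OF p(1) m] unfolding half by simp
  moreover have "(-2 :: int) ^ (4 * m + 1) = - (2 ^ (4 * m + 1))"
    by (simp add: power_minus')
  ultimately have "[(-2) ^ ((p - 1) div 2) = 1] (mod int p)"
    unfolding half by (metis cong_minus_minus_iff minus_minus)
  moreover have "\<not> [-2 = 0] (mod int p)"
    using p_a_relprime by (simp add: cong_0_iff)
  ultimately obtain t where "int p dvd t ^ 2 - (-2)"
    using square_root_mod_prime_if_euler[OF p(1) \<open>2 < p\<close>] by blast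
  then show ?thesis
    using that by simp
qed

lemma eq_if_cross_eq:
  fixes a b c d k :: int
  assumes pos: "0 < a" "0 < b" "0 < c" "0 < d" "0 < k"
    and cross: "a * d = b * c" and eq: "a ^ 2 + k * b ^ 2 = c ^ 2 + k * d ^ 2"
  shows "a = c \<and> b = d"
proof -
  have "\<not> a < c" if "0 < a" "0 < b" "0 < c" "0 < d" "a * d = b * c" "a ^ 2 + k * b ^ 2 = c ^ 2 + k * d ^ 2"
    for a b c d
  proof
    assume "a < c"
    then have "b * c < d * c"
      using that mult_strict_right_mono[of a c d] by (simp add: mult.commute)
    then have "b < d" using \<open>0 < c\<close> by simp
    then have "k * b ^ 2 < k * d ^ 2"
      using \<open>0 < b\<close> pos(5) by (simp add: power_strict_mono)
    moreover have "a ^ 2 < c ^ 2"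
      using \<open>a < c\<close> \<open>0 < a\<close> by (simp add: power_strict_mono)
    ultimately show False using that by linarith
  qed
  from this[of a b c d] this[of c d a b] have "a = c"
    using pos cross eq by (auto simp: mult.commute)
  then show ?thesis using pos cross by simp
qed

lemma brahmagupta_identity:
  fixes a b c d k :: "'a::comm_ring_1"
  shows "(a ^ 2 + k * b ^ 2) * (c ^ 2 + k * d ^ 2) = (a * c + k * b * d) ^ 2 + k * (a * d - b * c) ^ 2"
  by (simp add: power2_eq_square algebra_simps)

lemma square_plus_k_square_unique_if_dvd_diff:
  fixes a b c d N k :: int
  assumes pos: "0 < a" "0 < b" "0 < c" "0 < d" "0 < k"
    and N: "N = a ^ 2 + k * b ^ 2" "N = c ^ 2 + k * d ^ 2"
    and N_dvd: "N dvd a * d - b * c"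
  shows "a = c \<and> b = d"
proof -
  have "a * d - b * c = 0"
  proof (rule ccontr)
    assume "a * d - b * c \<noteq> 0"
    then have "\<bar>N\<bar> \<le> \<bar>a * d - b * c\<bar>"
      using dvd_imp_le_int[OF _ N_dvd] by simp
    then have "N * N \<le> (a * d - b * c) ^ 2"
      by (simp only: abs_le_square_iff power2_eq_square)
    moreover have "(a * d - b * c) ^ 2 \<le> k * (a * d - b * c) ^ 2"
      using pos(5) by (simp add: mult_le_cancel_right1)
    moreover have "0 < a * c + k * b * d"
      using pos by (simp add: add_pos_pos)
    then have "0 < (a * c + k * b * d) ^ 2"
      by simp
    moreover have "N * N = (a * c + k * b * d) ^ 2 + k * (a * d - b * c) ^ 2"
      unfolding brahmagupta_identity[symmetric] by (simp only: N(1)[symmetric] N(2)[symmetric])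
    ultimately show False
      by linarith
  qed
  then show ?thesis
    using eq_if_cross_eq[OF pos] N by simp
qed

lemma square_plus_k_square_unique_if_dvd_sum:
  fixes a b c d N k :: int
  assumes pos: "0 < a" "0 < b" "0 < c" "0 < d" and k: "k = 1 \<or> k = 2"
    and N: "N = a ^ 2 + k * b ^ 2" "N = c ^ 2 + k * d ^ 2"
    and N_dvd: "N dvd a * d + b * c"
  shows "k = 1 \<and> a = d \<and> b = c"
proof -
  have "N * N = (a ^ 2 + k * b ^ 2) * (c ^ 2 + k * d ^ 2)"
    by (simp only: N(1)[symmetric] N(2)[symmetric])
  also have "\<dots> = (a * c - k * b * d) ^ 2 + k * (a * d + b * c) ^ 2"
    using brahmagupta_identity[of a k b c "- d"] by (simp add: power2_eq_square algebra_simps)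
  finally have N_square: "N * N = (a * c - k * b * d) ^ 2 + k * (a * d + b * c) ^ 2" .
  have "0 < a * d + b * c"
    using pos by (simp add: add_pos_pos)
  then have "\<bar>N\<bar> \<le> \<bar>a * d + b * c\<bar>"
    using dvd_imp_le_int[OF _ N_dvd] by simp
  then have N_le: "N * N \<le> (a * d + b * c) ^ 2"
    by (simp only: abs_le_square_iff power2_eq_square)
  have "0 < N"
    using N(1) pos k by (auto simp: add_pos_nonneg)
  then have "0 < N * N"
    by simp
  have "k = 1"
  proof (rule ccontr)
    assume "k \<noteq> 1"
    then have "k = 2" using k by simp
    then show False
      using N_square N_le \<open>0 < N * N\<close> zero_le_power2[of "a * c - 2 * b * d"] by simp
  qed
  then have "(a * c - b * d) ^ 2 \<le> 0"
    using N_square N_le by simp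
  then have "a * c = b * d" by simp
  then show ?thesis
    using eq_if_cross_eq[of a b d c 1] pos N \<open>k = 1\<close> by (simp add: add.commute)
qed

lemma square_plus_k_square_unique:
  fixes a b c d N k :: int
  assumes pos: "0 < a" "0 < b" "0 < c" "0 < d" and k: "k = 1 \<or> k = 2"
    and N: "N = a ^ 2 + k * b ^ 2" "N = c ^ 2 + k * d ^ 2"
    and dvd: "N dvd a * d - b * c \<or> N dvd a * d + b * c"
  shows "(a = c \<and> b = d) \<or> (k = 1 \<and> a = d \<and> b = c)"
proof -
  have "0 < k" using k by auto
  with dvd show ?thesis
    using square_plus_k_square_unique_if_dvd_diff[OF pos _ N] square_plus_k_square_unique_if_dvd_sum[OF pos k N]
    by blast
qed

lemma prime_dvd_cross_term:
  fixes a b c d N k :: int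
  assumes "prime p" "p dvd N" "N = a ^ 2 + k * b ^ 2" "N = c ^ 2 + k * d ^ 2"
  shows "p dvd a * d - b * c \<or> p dvd a * d + b * c"
proof -
  have "(a * d - b * c) * (a * d + b * c) = a ^ 2 * d ^ 2 - b ^ 2 * c ^ 2"
    by (simp add: power2_eq_square algebra_simps)
  also have "\<dots> = (N - k * b ^ 2) * d ^ 2 - b ^ 2 * (N - k * d ^ 2)"
    using assms(3,4) by simp
  also have "\<dots> = N * (d ^ 2 - b ^ 2)"
    by (simp add: algebra_simps)
  finally have "p dvd (a * d - b * c) * (a * d + b * c)"
    using assms(2) by simp
  then show ?thesis
    using assms(1) prime_dvd_mult_iff by blast
qed

lemma odd_square_mod_8: "odd (x :: nat) \<Longrightarrow> x ^ 2 mod 8 = 1"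
  using square_mod_8_eq_1_iff[of x] by (simp add: cong_def)

lemma odd_reps_eq_0:
  assumes "n mod 8 \<noteq> (1 + k) mod 8"
  shows "odd_reps k n = 0"
proof -
  have "(x ^ 2 + k * y ^ 2) mod 8 = (1 + k) mod 8" if "odd x" "odd y" for x y :: nat
  proof -
    have "(x ^ 2 + k * y ^ 2) mod 8 = (x ^ 2 mod 8 + (k * (y ^ 2 mod 8)) mod 8) mod 8"
      by (simp only: mod_add_eq mod_mult_right_eq)
    also have "\<dots> = (1 + k mod 8) mod 8"
      using odd_square_mod_8[OF that(1)] odd_square_mod_8[OF that(2)] by simp
    finally show ?thesis
      by (simp add: mod_Suc_eq)
  qed
  then have "{(x, y). odd x \<and> odd y \<and> x ^ 2 + k * y ^ 2 = n} = {}"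
    using assms by auto
  then show ?thesis
    by (simp only: odd_reps_def card.empty)
qed

lemma odd_reps_unique:
  fixes p N k x y u v :: nat
  assumes p: "prime p" "odd p" and N: "N = p \<or> N = 2 * p" and k: "k = 1 \<or> k = 2"
    and xy: "odd x" "odd y" "x ^ 2 + k * y ^ 2 = N"
    and uv: "odd u" "odd v" "u ^ 2 + k * v ^ 2 = N"
  shows "(u, v) = (x, y) \<or> (k = 1 \<and> (u, v) = (y, x))"
proof -
  have N_int: "int N = int u ^ 2 + int k * int v ^ 2" "int N = int x ^ 2 + int k * int y ^ 2"
    using xy(3) uv(3) by (simp_all flip: of_nat_power of_nat_mult of_nat_add)
  have "int p dvd int N"
    using N by auto
  then have p_dvd: "int p dvd int u * int y - int v * int x \<or> int p dvd int u * int y + int v * int x"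
    using prime_dvd_cross_term[OF _ _ N_int] p(1) by simp
  have "int N dvd int u * int y - int v * int x \<or> int N dvd int u * int y + int v * int x"
  proof -
    have double: "2 * int p dvd z" if p_dvd_z: "int p dvd z" and "even z" for z
    proof -
      obtain r where "z = int p * r" using p_dvd_z by (rule dvdE)
      moreover have "even r" using \<open>even z\<close> p(2) calculation by simp
      ultimately show ?thesis by (auto elim!: evenE)
    qed
    have "even (int u * int y - int v * int x)" "even (int u * int y + int v * int x)"
      using xy(1,2) uv(1,2) by simp_all
    then have "2 * int p dvd int u * int y - int v * int x \<or> 2 * int p dvd int u * int y + int v * int x"
      using p_dvd double by blast
    then show ?thesis
      using N p_dvd by auto
  qed
  moreover have "0 < int u" "0 < int v" "0 < int x" "0 < int y"
    using xy(1,2) uv(1,2) by (simp_all add: odd_pos)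
  moreover have "int k = 1 \<or> int k = 2"
    using k by auto
  ultimately have "(int u = int x \<and> int v = int y) \<or> (int k = 1 \<and> int u = int y \<and> int v = int x)"
    using square_plus_k_square_unique[OF _ _ _ _ _ N_int] by blast
  then show ?thesis by auto
qed

lemma prime_eq_sum_of_two_squares:
  assumes p: "prime p" "p mod 4 = 1"
  obtains a b :: nat where "0 < b" "b < a" "a ^ 2 + b ^ 2 = p"
proof -
  obtain t where "int p dvd t ^ 2 + int 1"
    using minus_one_square_mod_prime[OF p] by auto
  then obtain X Y :: nat where XY: "X ^ 2 + Y ^ 2 = p"
    using prime_eq_square_plus_k_square[OF p(1), of 1 t] by auto
  have "X \<noteq> Y"
  proof
    assume "X = Y"
    then have "p = 2 * X ^ 2" using XY by simp
    then show False using p(2) by presburger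
  qed
  have "X \<noteq> 0" "Y \<noteq> 0"
    using XY prime_not_square[OF p(1), of X] prime_not_square[OF p(1), of Y] by auto
  show ?thesis
  proof (cases "Y < X")
    case True
    then show ?thesis using that XY \<open>Y \<noteq> 0\<close> by blast
  next
    case False
    then have "X < Y" using \<open>X \<noteq> Y\<close> by simp
    moreover have "Y ^ 2 + X ^ 2 = p" using XY by (simp add: add.commute)
    ultimately show ?thesis using that \<open>X \<noteq> 0\<close> by blast
  qed
qed

lemma double_prime_eq_odd_square_sum:
  assumes p: "prime p" "p mod 4 = 1"
  obtains x y :: nat where "odd x" "odd y" "x \<noteq> y" "x ^ 2 + y ^ 2 = 2 * p"
proof -
  have "odd p" using p(2) by presburger
  obtain a b where "0 < b" "b < a" "a ^ 2 + b ^ 2 = p"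
    using prime_eq_sum_of_two_squares[OF p] .
  moreover obtain d where "a = b + d" "0 < d"
    using less_imp_add_positive[OF \<open>b < a\<close>] by blast
  ultimately have ab: "a = b + d" "0 < d" "0 < b" "a ^ 2 + b ^ 2 = p"
    by simp_all
  have "(a + b) ^ 2 = p + 2 * (a * b)"
    using ab(4) by (simp add: power2_eq_square algebra_simps)
  then have "odd ((a + b) ^ 2)"
    using \<open>odd p\<close> by simp
  then have "odd (a + b)"
    by simp
  moreover have "a + b = (a - b) + 2 * b"
    using ab(1) by simp
  then have "odd (a - b)"
    using \<open>odd (a + b)\<close> by simp
  moreover have "a + b \<noteq> a - b"
    using ab(1,3) by simp
  moreover have "(a + b) ^ 2 + (a - b) ^ 2 = 2 * p"
    using ab(1,4) by (simp add: power2_eq_square algebra_simps)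
  ultimately show ?thesis
    using that by blast
qed

lemma odd_reps_1_double_prime:
  assumes p: "prime p"
  shows "odd_reps 1 (2 * p) = (if p mod 4 = 1 then 2 else 0)"
proof (cases "p mod 4 = 1")
  case False
  then have "2 * p mod 8 \<noteq> (1 + 1) mod 8" by presburger
  then show ?thesis using odd_reps_eq_0 False by simp
next
  case True
  then have "odd p" by presburger
  obtain x y where xy: "odd x" "odd y" "x \<noteq> y" "x ^ 2 + y ^ 2 = 2 * p"
    using double_prime_eq_odd_square_sum[OF p True] .
  then have rep: "x ^ 2 + 1 * y ^ 2 = 2 * p" "y ^ 2 + 1 * x ^ 2 = 2 * p"
    by simp_all
  have "{(u, v). odd u \<and> odd v \<and> u ^ 2 + 1 * v ^ 2 = 2 * p} = {(x, y), (y, x)}"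
    using odd_reps_unique[OF p \<open>odd p\<close> _ _ xy(1,2) rep(1)] rep xy(1,2) by auto
  then show ?thesis
    using True xy(3) unfolding odd_reps_def by simp
qed

lemma odd_reps_2_prime:
  assumes p: "prime p"
  shows "odd_reps 2 p = (if p mod 8 = 3 then 1 else 0)"
proof (cases "p mod 8 = 3")
  case False
  then show ?thesis using odd_reps_eq_0 by simp
next
  case True
  then have "odd p" by presburger
  obtain t where "int p dvd t ^ 2 + int 2"
    using minus_two_square_mod_prime[OF p True] by auto
  then obtain x y :: nat where rep: "x ^ 2 + 2 * y ^ 2 = p"
    using prime_eq_square_plus_k_square[OF p, of 2 t] by auto
  have "odd x"
  proof
    assume "even x"
    then have "even (x ^ 2 + 2 * y ^ 2)" by simp
    then show False using rep \<open>odd p\<close> by simp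
  qed
  have "odd y"
  proof
    assume "even y"
    then obtain w where "y = 2 * w" ..
    then have "p = x ^ 2 + 8 * w ^ 2"
      using rep by (simp add: power2_eq_square)
    then have "p mod 8 = x ^ 2 mod 8"
      by simp
    then show False
      using True odd_square_mod_8[OF \<open>odd x\<close>] by simp
  qed
  have "(u, v) = (x, y)" if "odd u" "odd v" "u ^ 2 + 2 * v ^ 2 = p" for u v
    using odd_reps_unique[OF p \<open>odd p\<close> _ _ \<open>odd x\<close> \<open>odd y\<close> rep that] by simp
  then have "{(u, v). odd u \<and> odd v \<and> u ^ 2 + 2 * v ^ 2 = p} = {(x, y)}"
    using rep \<open>odd x\<close> \<open>odd y\<close> by blast
  then show ?thesis
    using True unfolding odd_reps_def by simp
qed

theorem proposition3p1:
  fixes l :: nat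
  assumes "prime l"
  shows "(l mod 8 \<in> {1, 3, 5} \<longrightarrow> [fps_nth f_form l = 2] (mod 4)) \<and>
         (l mod 8 \<in> {2, 7} \<longrightarrow> [fps_nth f_form l = 0] (mod 4))"
proof -
  have "l mod 4 = 1 \<longleftrightarrow> l mod 8 = 1 \<or> l mod 8 = 5"
    by presburger
  then have "odd_reps 1 (2 * l) = (if l mod 8 = 1 \<or> l mod 8 = 5 then 2 else 0)"
    using odd_reps_1_double_prime[OF assms] by simp
  moreover have "odd_reps 2 l = (if l mod 8 = 3 then 1 else 0)"
    using odd_reps_2_prime[OF assms] .
  ultimately show ?thesis
    using f_form_nth_cong_odd_reps[of l] by auto
qed
end
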